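(* Let $\mathcal F$ be a Grothendieck topology on a finite monoid $M$. Then there is a two-sided ideal $\mathfrak m$ of $M$ with $\mathfrak m^2=\mathfrak m$ such that $\mathcal F=\mathcal F_{\mathfrak m}:=\{\mathfrak a \text{ right ideal}\mid \mathfrak m\subseteq\mathfrak a\}$.
   Context: Right ideals may be empty. $\mathfrak m^2=\{xy\mid x,y\in\mathfrak m\}$. For a right ideal $\mathfrak a$ and $m\in M$, $(\mathfrak a:m)=\{x\in M\mid mx\in\mathfrak a\}$. A Grothendieck topology on $M$ is a set $\mathcal F$ of right ideals such that (T1) $M\in\mathcal F$; (T2) $\mathfrak a\in\mathcal F$, $m\in M$ imply $(\mathfrak a:m)\in\mathcal F$; (T3) if $\mathfrak b\in\mathcal F$ and $\mathfrak a$ is a right ideal with $(\mathfrak a:b)\in\mathcal F$ for all $b\in\mathfrak b$, then $\mathfrak a\in\mathcal F$. *)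

theory Defs
  imports Main
begin

text \<open>A monoid is modelled by a type of class monoid_mult (the whole type is M).
  Right ideals may be empty.\<close>

definition right_ideal :: "'a::monoid_mult set \<Rightarrow> bool" where
  "right_ideal A \<longleftrightarrow> (\<forall>x\<in>A. \<forall>m. x * m \<in> A)"

definition two_sided_ideal :: "'a::monoid_mult set \<Rightarrow> bool" where
  "two_sided_ideal A \<longleftrightarrow> (\<forall>x\<in>A. \<forall>m. x * m \<in> A \<and> m * x \<in> A)"

definition ideal_sq :: "'a::monoid_mult set \<Rightarrow> 'a set" where
  "ideal_sq A = {x * y | x y. x \<in> A \<and> y \<in> A}"

definition ideal_colon :: "'a::monoid_mult set \<Rightarrow> 'a \<Rightarrow> 'a set" where
  "ideal_colon A m = {x. m * x \<in> A}"

definition grothendieck_topology :: "'a::monoid_mult set set \<Rightarrow> bool" where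
  "grothendieck_topology F \<longleftrightarrow>
     (\<forall>A\<in>F. right_ideal A) \<and>
     UNIV \<in> F \<and>
     (\<forall>A\<in>F. \<forall>m. ideal_colon A m \<in> F) \<and>
     (\<forall>B\<in>F. \<forall>A. right_ideal A \<and> (\<forall>b\<in>B. ideal_colon A b \<in> F) \<longrightarrow> A \<in> F)"

definition topology_of_ideal :: "'a::monoid_mult set \<Rightarrow> 'a set set" where
  "topology_of_ideal I = {A. right_ideal A \<and> I \<subseteq> A}"

end

theory Submission
  imports Defs
begin

text \<open>The intersection m of all covering right ideals is itself covering, since a
  Grothendieck topology is closed under finite intersections and a finite monoid has only
  finitely many right ideals. The rest holds for any topology F with a least member m: upward
  closure gives F = F_m; (m : y) \<in> F gives y m \<subseteq> m; and since (m^2 : b) \<supseteq> m for every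
  b \<in> m, the locality axiom (T3) puts m^2 into F, whence m \<subseteq> m^2.\<close>

lemma right_ideal_Int: "right_ideal A \<Longrightarrow> right_ideal B \<Longrightarrow> right_ideal (A \<inter> B)"
  unfolding right_ideal_def by blast

lemma right_ideal_ideal_colon: "right_ideal A \<Longrightarrow> right_ideal (ideal_colon A m)"
  unfolding right_ideal_def ideal_colon_def by (metis mem_Collect_eq mult.assoc)

lemma right_ideal_ideal_sq:
  assumes "right_ideal A"
  shows "right_ideal (ideal_sq A)"
  unfolding right_ideal_def ideal_sq_def
proof (intro ballI allI)
  fix z k assume "z \<in> {x * y |x y. x \<in> A \<and> y \<in> A}"
  then obtain x y where "z = x * y" "x \<in> A" "y \<in> A" by blast
  moreover have "y * k \<in> A" using assms \<open>y \<in> A\<close> unfolding right_ideal_def by blast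
  ultimately show "z * k \<in> {x * y |x y. x \<in> A \<and> y \<in> A}"
    by (metis (mono_tags, lifting) mem_Collect_eq mult.assoc)
qed

lemma ideal_sq_subset: "right_ideal A \<Longrightarrow> ideal_sq A \<subseteq> A"
  unfolding right_ideal_def ideal_sq_def by blast

lemma ideal_colon_eq_UNIV: "right_ideal B \<Longrightarrow> b \<in> B \<Longrightarrow> ideal_colon B b = UNIV"
  unfolding right_ideal_def ideal_colon_def by blast

lemma ideal_colon_ideal_sq_supset: "b \<in> A \<Longrightarrow> A \<subseteq> ideal_colon (ideal_sq A) b"
  unfolding ideal_colon_def ideal_sq_def by blast

context
  fixes F :: "'a::monoid_mult set set"
  assumes topology: "grothendieck_topology F"
begin

lemma grothendieck_topology_right_ideal: "A \<in> F \<Longrightarrow> right_ideal A"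
  using topology unfolding grothendieck_topology_def by blast

lemma grothendieck_topology_UNIV: "UNIV \<in> F"
  using topology unfolding grothendieck_topology_def by blast

lemma grothendieck_topology_ideal_colon: "A \<in> F \<Longrightarrow> ideal_colon A m \<in> F"
  using topology unfolding grothendieck_topology_def by blast

lemma grothendieck_topology_local:
  "B \<in> F \<Longrightarrow> right_ideal A \<Longrightarrow> (\<And>b. b \<in> B \<Longrightarrow> ideal_colon A b \<in> F) \<Longrightarrow> A \<in> F"
  using topology unfolding grothendieck_topology_def by blast

lemma grothendieck_topology_mono:
  assumes "A \<in> F" "A \<subseteq> B" "right_ideal B"
  shows "B \<in> F"
  using grothendieck_topology_local[OF \<open>A \<in> F\<close> \<open>right_ideal B\<close>] assms(2,3)
  by (simp add: ideal_colon_eq_UNIV subsetD grothendieck_topology_UNIV)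

lemma grothendieck_topology_Int:
  assumes "A \<in> F" "B \<in> F"
  shows "A \<inter> B \<in> F"
proof (rule grothendieck_topology_local[OF \<open>A \<in> F\<close>])
  show "right_ideal (A \<inter> B)"
    using assms by (simp add: right_ideal_Int grothendieck_topology_right_ideal)
  fix a assume "a \<in> A"
  then have "ideal_colon (A \<inter> B) a = ideal_colon B a"
    using grothendieck_topology_right_ideal[OF \<open>A \<in> F\<close>] unfolding ideal_colon_def right_ideal_def by blast
  then show "ideal_colon (A \<inter> B) a \<in> F"
    using grothendieck_topology_ideal_colon[OF \<open>B \<in> F\<close>] by simp
qed

lemma grothendieck_topology_Inter: "finite S \<Longrightarrow> S \<subseteq> F \<Longrightarrow> \<Inter>S \<in> F"
  by (induction S rule: finite_induct) (simp_all add: grothendieck_topology_UNIV grothendieck_topology_Int)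

context
  fixes m :: "'a set"
  assumes least_mem: "m \<in> F" and least: "\<And>A. A \<in> F \<Longrightarrow> m \<subseteq> A"
begin

lemma grothendieck_topology_eq_topology_of_least: "F = topology_of_ideal m"
proof
  show "F \<subseteq> topology_of_ideal m"
    unfolding topology_of_ideal_def using least grothendieck_topology_right_ideal by blast
  show "topology_of_ideal m \<subseteq> F"
    unfolding topology_of_ideal_def using grothendieck_topology_mono[OF least_mem] by blast
qed

lemma two_sided_ideal_least: "two_sided_ideal m"
  unfolding two_sided_ideal_def
proof (intro ballI allI conjI)
  fix x y assume "x \<in> m"
  then show "x * y \<in> m"
    using grothendieck_topology_right_ideal[OF least_mem] unfolding right_ideal_def by blast
  have "m \<subseteq> ideal_colon m y"
    using least grothendieck_topology_ideal_colon[OF least_mem] .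
  with \<open>x \<in> m\<close> show "y * x \<in> m"
    unfolding ideal_colon_def by blast
qed

lemma ideal_sq_least: "ideal_sq m = m"
proof -
  have "right_ideal m"
    using grothendieck_topology_right_ideal[OF least_mem] .
  have "ideal_sq m \<in> F"
  proof (rule grothendieck_topology_local[OF least_mem])
    show "right_ideal (ideal_sq m)"
      using \<open>right_ideal m\<close> by (rule right_ideal_ideal_sq)
    fix b assume "b \<in> m"
    then show "ideal_colon (ideal_sq m) b \<in> F"
      by (intro grothendieck_topology_mono[OF least_mem] ideal_colon_ideal_sq_supset
          right_ideal_ideal_colon right_ideal_ideal_sq \<open>right_ideal m\<close>)
  qed
  then show ?thesis
    using least ideal_sq_subset[OF \<open>right_ideal m\<close>] by blast
qed

end

end

theorem proposition4p3:
  fixes F :: "('a::{monoid_mult, finite}) set set"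
  assumes "grothendieck_topology F"
  shows "\<exists>I. two_sided_ideal I \<and> ideal_sq I = I \<and> F = topology_of_ideal I"
proof (intro exI conjI)
  have mem: "\<Inter>F \<in> F"
    using grothendieck_topology_Inter[OF assms] by simp
  have least: "\<And>A. A \<in> F \<Longrightarrow> \<Inter>F \<subseteq> A"
    by blast
  show "two_sided_ideal (\<Inter>F)"
    using two_sided_ideal_least[OF assms mem least] .
  show "ideal_sq (\<Inter>F) = \<Inter>F"
    using ideal_sq_least[OF assms mem least] .
  show "F = topology_of_ideal (\<Inter>F)"
    using grothendieck_topology_eq_topology_of_least[OF assms mem least] .
qed

end
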